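(* Any naturally ordered compact Hausdorff topological semiring $R$ is bounded, i.e., the partially ordered set $(R,\le)$ has a greatest element.
   Context: A semiring is an algebra $(R,+,\cdot,0)$ such that $(R,+,0)$ is a commutative monoid, $(R,\cdot)$ is a semigroup (no multiplicative identity is required), multiplication distributes over addition on both sides, and $0\cdot x = x\cdot 0 = 0$ for all $x\in R$. A topological semiring is a semiring with a topology in which addition and multiplication are continuous. On $R$ define $x\le y$ iff there is $z\in R$ with $x+z=y$; $R$ is naturally ordered if this preorder is antisymmetric. *)

theory Defs
  imports "HOL-Analysis.Analysis"
begin

definition nat_le :: "'a::semiring_0 \<Rightarrow> 'a \<Rightarrow> bool" where
  "nat_le x y \<longleftrightarrow> (\<exists>z. x + z = y)"

definition naturally_ordered :: "'a::semiring_0 itself \<Rightarrow> bool" where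
  "naturally_ordered _ \<longleftrightarrow> (\<forall>x y::'a. nat_le x y \<and> nat_le y x \<longrightarrow> x = y)"

definition topological_semiring :: "'a::{semiring_0, topological_space} itself \<Rightarrow> bool" where
  "topological_semiring _ \<longleftrightarrow>
     continuous_on (UNIV :: ('a \<times> 'a) set) (\<lambda>p. fst p + snd p) \<and>
     continuous_on (UNIV :: ('a \<times> 'a) set) (\<lambda>p. fst p * snd p)"

end

theory Submission
  imports Defs
begin

text \<open>Each principal up-set \<open>x + R\<close> is a continuous image of the compact space \<open>R\<close>,
  hence closed. Finitely many of them always meet, since the sum of their generators lies
  in each of them; by compactness all of them meet, and a common point is a greatest
  element.\<close>

lemma continuous_on_add_left_of_joint:
  fixes x :: "'a::{plus, topological_space}"
  assumes "continuous_on (UNIV :: ('a \<times> 'a) set) (\<lambda>p. fst p + snd p)"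
  shows "continuous_on UNIV (\<lambda>y. x + y)"
proof -
  have "continuous_on UNIV (\<lambda>y::'a. (x, y))"
    by (intro continuous_intros)
  from continuous_on_compose[OF this continuous_on_subset[OF assms]]
  show ?thesis
    by (simp add: o_def)
qed

lemma nat_le_upset_eq_range: "{y. nat_le x y} = range (\<lambda>z. x + z)"
  by (auto simp: nat_le_def)

lemma closed_nat_le_upset:
  fixes x :: "'a::{semiring_0, t2_space}"
  assumes "continuous_on (UNIV :: ('a \<times> 'a) set) (\<lambda>p. fst p + snd p)"
    and "compact (UNIV :: 'a set)"
  shows "closed {y. nat_le x y}"
  unfolding nat_le_upset_eq_range
  using compact_continuous_image[OF continuous_on_add_left_of_joint[OF assms(1)] assms(2)]
  by (rule compact_imp_closed)

lemma nat_le_sum: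
  fixes X :: "'a::semiring_0 set"
  assumes "finite X" and "x \<in> X"
  shows "nat_le x (\<Sum>X)"
  using sum.remove[OF assms, of id] by (auto simp: nat_le_def)

lemma ex_nat_le_greatest_if_compact:
  assumes "continuous_on (UNIV :: ('a::{semiring_0, t2_space} \<times> 'a) set) (\<lambda>p. fst p + snd p)"
    and "compact (UNIV :: 'a set)"
  shows "\<exists>t::'a. \<forall>x. nat_le x t"
proof -
  let ?U = "(\<lambda>x::'a. {y. nat_le x y}) ` UNIV"
  have "UNIV \<inter> \<Inter>?U \<noteq> {}"
  proof (rule compact_imp_fip[OF assms(2)])
    show "closed S" if "S \<in> ?U" for S
      using that closed_nat_le_upset[OF assms] by auto
  next
    fix V assume "finite V" and "V \<subseteq> ?U"
    then obtain X where "finite X" and V: "V = (\<lambda>x. {y. nat_le x y}) ` X"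
      by (meson finite_subset_image)
    then have "\<Sum>X \<in> \<Inter>V"
      using nat_le_sum by auto
    then show "UNIV \<inter> \<Inter>V \<noteq> {}"
      by blast
  qed
  then show ?thesis
    by auto
qed

theorem corollary3p5:
  assumes "topological_semiring TYPE('a::{semiring_0, t2_space})"
    and "compact (UNIV :: 'a set)"
    and "naturally_ordered TYPE('a)"
  shows "\<exists>t::'a. \<forall>x. nat_le x t"
  using assms(1,2) ex_nat_le_greatest_if_compact
  unfolding topological_semiring_def by blast

end
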